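(* Let $a\ge b\ge1$ be integers with either $b\ge2$, or $b=1$ and $a\ge5$, and define $c_j,d_j$ ($j\in\mathbb Z_+$) by $c_0=d_0=0$, $c_1=d_1=1$, $c_{k+2}+c_k=a d_{k+1}$, $d_{k+2}+d_k=b c_{k+1}$. Then for all $k\ge0$: $$bc_{k+1}^2+ad_k^2-abc_{k+1}d_k+abc_{k+1}-2ad_k+a>0,$$ $$bc_k^2+ad_{k+1}^2-abc_kd_{k+1}-2bc_k+abd_{k+1}+b>0.$$
   Context: $\mathbb Z_+=\{0,1,2,\dots\}$. *)

theory Defs
  imports Main
begin

fun cd_seq :: "int \<Rightarrow> int \<Rightarrow> nat \<Rightarrow> int \<times> int" where
  "cd_seq a b 0 = (0, 0)"
| "cd_seq a b (Suc 0) = (1, 1)"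
| "cd_seq a b (Suc (Suc k)) =
     (a * snd (cd_seq a b (Suc k)) - fst (cd_seq a b k),
      b * fst (cd_seq a b (Suc k)) - snd (cd_seq a b k))"

definition cseq :: "int \<Rightarrow> int \<Rightarrow> nat \<Rightarrow> int" where
  "cseq a b k = fst (cd_seq a b k)"

definition dseq :: "int \<Rightarrow> int \<Rightarrow> nat \<Rightarrow> int" where
  "dseq a b k = snd (cd_seq a b k)"

end

theory Submission
  imports Defs
begin

text \<open>The quadratic form Q(x, y) = b x^2 + a y^2 - a b x y is invariant under the Vieta
  moves x \<mapsto> a y - x and y \<mapsto> b x - y that generate the sequences, so on the consecutive
  pairs (c_(k+1), d_k) and (c_k, d_(k+1)) it only takes the values a and b. The two polynomials
  of the theorem are these values of Q plus a (d_(k+2) - d_k + 1) and b (c_(k+2) - c_k + 1)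
  respectively. Both sequences satisfy u_(k+4) = (a b - 2) u_(k+2) - u_k, and once a b \<ge> 4
  this forces u_(k+2) \<ge> u_k \<ge> 0.\<close>

lemma cseq_0 [simp]: "cseq a b 0 = 0"
  and dseq_0 [simp]: "dseq a b 0 = 0"
  and cseq_Suc_0 [simp]: "cseq a b (Suc 0) = 1"
  and dseq_Suc_0 [simp]: "dseq a b (Suc 0) = 1"
  by (simp_all add: cseq_def dseq_def)

lemma cseq_add2: "cseq a b (k + 2) = a * dseq a b (k + 1) - cseq a b k"
  and dseq_add2: "dseq a b (k + 2) = b * cseq a b (k + 1) - dseq a b k"
  by (simp_all add: cseq_def dseq_def)

lemma cseq_add4: "cseq a b (k + 4) = (a * b - 2) * cseq a b (k + 2) - cseq a b k"
proof -
  have "cseq a b (k + 4) = a * dseq a b (k + 3) - cseq a b (k + 2)"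
    using cseq_add2 [of a b "k + 2"] by (simp add: eval_nat_numeral)
  moreover have "dseq a b (k + 3) = b * cseq a b (k + 2) - dseq a b (k + 1)"
    using dseq_add2 [of a b "k + 1"] by (simp add: eval_nat_numeral)
  moreover have "a * dseq a b (k + 1) = cseq a b (k + 2) + cseq a b k"
    using cseq_add2 [of a b k] by simp
  ultimately show ?thesis
    by (simp add: algebra_simps)
qed

lemma dseq_add4: "dseq a b (k + 4) = (a * b - 2) * dseq a b (k + 2) - dseq a b k"
proof -
  have "dseq a b (k + 4) = b * cseq a b (k + 3) - dseq a b (k + 2)"
    using dseq_add2 [of a b "k + 2"] by (simp add: eval_nat_numeral)
  moreover have "cseq a b (k + 3) = a * dseq a b (k + 2) - cseq a b (k + 1)"
    using cseq_add2 [of a b "k + 1"] by (simp add: eval_nat_numeral)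
  moreover have "b * cseq a b (k + 1) = dseq a b (k + 2) + dseq a b k"
    using dseq_add2 [of a b k] by simp
  ultimately show ?thesis
    by (simp add: algebra_simps)
qed

definition qform :: "int \<Rightarrow> int \<Rightarrow> int \<Rightarrow> int \<Rightarrow> int" where
  "qform a b x y = b * x\<^sup>2 + a * y\<^sup>2 - a * b * x * y"

lemma qform_reflect_fst: "qform a b (a * y - x) y = qform a b x y"
  by (simp add: qform_def algebra_simps power2_eq_square)

lemma qform_reflect_snd: "qform a b x (b * x - y) = qform a b x y"
  by (simp add: qform_def algebra_simps power2_eq_square)

lemma qform_cseq_dseq:
  "qform a b (cseq a b (k + 1)) (dseq a b k) = (if even k then b else a) \<and>
   qform a b (cseq a b k) (dseq a b (k + 1)) = (if even k then a else b)"
proof (induction k)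
  case 0
  show ?case by (simp add: qform_def)
next
  case (Suc k)
  have "qform a b (cseq a b (k + 2)) (dseq a b (k + 1)) = qform a b (cseq a b k) (dseq a b (k + 1))"
    unfolding cseq_add2 by (rule qform_reflect_fst)
  moreover have "qform a b (cseq a b (k + 1)) (dseq a b (k + 2)) = qform a b (cseq a b (k + 1)) (dseq a b k)"
    unfolding dseq_add2 by (rule qform_reflect_snd)
  ultimately show ?case
    using Suc.IH by simp
qed

lemma recurrence_step2_mono:
  fixes u :: "nat \<Rightarrow> 'a :: linordered_idom"
  assumes rec: "\<And>k. u (k + 4) = m * u (k + 2) - u k" and "2 \<le> m"
    and "0 \<le> u 0" "u 0 \<le> u 2" "0 \<le> u 1" "u 1 \<le> u 3"
  shows "0 \<le> u k \<and> u k \<le> u (k + 2)"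
proof (induction k rule: nat_induct2)
  case 0
  show ?case using assms by (simp add: eval_nat_numeral)
next
  case 1
  show ?case using assms by (simp add: eval_nat_numeral)
next
  case (step k)
  then have "0 \<le> (m - 2) * u (k + 2)"
    using \<open>2 \<le> m\<close> by simp
  then show ?case
    using step rec [of k] by (simp add: algebra_simps eval_nat_numeral)
qed

lemma cseq_step2_mono:
  assumes "0 \<le> a" "4 \<le> a * b"
  shows "0 \<le> cseq a b k \<and> cseq a b k \<le> cseq a b (k + 2)"
  using assms cseq_add2 [of a b 0] cseq_add2 [of a b 1] dseq_add2 [of a b 0]
  by (intro recurrence_step2_mono [where m = "a * b - 2"] cseq_add4) (simp_all add: eval_nat_numeral)

lemma dseq_step2_mono:
  assumes "0 \<le> b" "4 \<le> a * b"
  shows "0 \<le> dseq a b k \<and> dseq a b k \<le> dseq a b (k + 2)"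
  using assms dseq_add2 [of a b 0] dseq_add2 [of a b 1] cseq_add2 [of a b 0]
  by (intro recurrence_step2_mono [where m = "a * b - 2"] dseq_add4) (simp_all add: eval_nat_numeral mult.commute)

theorem lemma3p6:
  fixes a b :: int and k :: nat
  assumes "a \<ge> b" and "b \<ge> 1"
    and "b \<ge> 2 \<or> (b = 1 \<and> a \<ge> 5)"
  shows "(b * (cseq a b (k+1))^2 + a * (dseq a b k)^2
           - a * b * cseq a b (k+1) * dseq a b k + a * b * cseq a b (k+1)
           - 2 * a * dseq a b k + a > 0)
       \<and> (b * (cseq a b k)^2 + a * (dseq a b (k+1))^2
           - a * b * cseq a b k * dseq a b (k+1) - 2 * b * cseq a b k
           + a * b * dseq a b (k+1) + b > 0)"
proof -
  have "4 \<le> a * b"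
    using assms mult_mono [of 2 a 2 b] by auto
  then have c_le: "cseq a b k \<le> cseq a b (k + 2)" and d_le: "dseq a b k \<le> dseq a b (k + 2)"
    using assms cseq_step2_mono dseq_step2_mono by auto
  have "b * (cseq a b (k+1))^2 + a * (dseq a b k)^2
           - a * b * cseq a b (k+1) * dseq a b k + a * b * cseq a b (k+1)
           - 2 * a * dseq a b k + a
        = qform a b (cseq a b (k + 1)) (dseq a b k) + a * (dseq a b (k + 2) - dseq a b k + 1)"
    unfolding dseq_add2 qform_def by (simp add: algebra_simps)
  moreover have "b * (cseq a b k)^2 + a * (dseq a b (k+1))^2
           - a * b * cseq a b k * dseq a b (k+1) - 2 * b * cseq a b k
           + a * b * dseq a b (k+1) + b
        = qform a b (cseq a b k) (dseq a b (k + 1)) + b * (cseq a b (k + 2) - cseq a b k + 1)"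
    unfolding cseq_add2 qform_def by (simp add: algebra_simps)
  moreover have "0 < qform a b (cseq a b (k + 1)) (dseq a b k)" "0 < qform a b (cseq a b k) (dseq a b (k + 1))"
    using assms qform_cseq_dseq [of a b k] by auto
  moreover have "0 < a * (dseq a b (k + 2) - dseq a b k + 1)" "0 < b * (cseq a b (k + 2) - cseq a b k + 1)"
    using assms c_le d_le by simp_all
  ultimately show ?thesis
    by linarith
qed

end
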